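(* For every integer $n\ge1$, $\zeta(-n,-n-1|1)=\zeta(-n-1,-n|1)$.
   Context: Normalized multiple Bernoulli polynomials: for integers $k\ge0$, $\zeta(-k|z)=-\frac{B_{k+1}(z)}{k+1}$ ($B_n(z)$ the Bernoulli polynomials, $B_n=B_n(0)$), and for $k_1,k_2\ge0$, $\zeta(-k_1,-k_2|z)=-\frac{1}{k_2+1}\zeta(-k_1-k_2-1|z)-\frac12\zeta(-k_1-k_2|z)+\sum_{q=1}^{k_2}(-k_2)_q\frac{B_{q+1}}{(q+1)!}\zeta(-k_1-k_2+q|z)$, with $(a)_q=a(a+1)\cdots(a+q-1)$. *)

theory Defs
  imports Complex_Main
begin

text \<open>Bernoulli numbers, convention B_1 = -1/2 (so that B_n = B_n(0)),
  via the recurrence sum_{k<=n} C(n+1,k) B_k = 0 for n >= 1, B_0 = 1.\<close>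
fun bernoulli :: "nat \<Rightarrow> real" where
  "bernoulli n = (if n = 0 then 1 else
     - (\<Sum>k<n. real (Suc n choose k) * bernoulli k) / real (Suc n))"

declare bernoulli.simps [simp del]

definition bernpoly :: "nat \<Rightarrow> real \<Rightarrow> real" where
  "bernpoly n z = (\<Sum>k\<le>n. real (n choose k) * bernoulli k * z ^ (n - k))"

definition zeta1 :: "nat \<Rightarrow> real \<Rightarrow> real" where
  "zeta1 k z = - bernpoly (k + 1) z / real (k + 1)"

text \<open>zeta(-k1,-k2 | z).\<close>
definition zeta2 :: "nat \<Rightarrow> nat \<Rightarrow> real \<Rightarrow> real" where
  "zeta2 k1 k2 z =
     - (1 / real (k2 + 1)) * zeta1 (k1 + k2 + 1) z
     - (1 / 2) * zeta1 (k1 + k2) z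
     + (\<Sum>q=1..k2. pochhammer (- real k2) q * (bernoulli (q + 1) / fact (q + 1))
                     * zeta1 (k1 + k2 - q) z)"

end

theory Submission
  imports Defs "HOL-Computational_Algebra.Formal_Power_Series"
begin

text \<open>At \<open>z = 1\<close> we have \<open>B\<^sub>m(1) = B\<^sub>m\<close> for \<open>m \<ge> 2\<close>, and the Bernoulli numbers of odd
  index \<open>\<ge> 3\<close> vanish. Hence, when the weight \<open>k\<^sub>1 + k\<^sub>2\<close> is odd, the first term of
  \<open>\<zeta>(-k\<^sub>1,-k\<^sub>2|1)\<close> vanishes and so does every summand, because its factors
  \<open>B\<^sub>q\<^sub>+\<^sub>1\<close> and \<open>B\<^bsub>k\<^sub>1+k\<^sub>2-q+1\<^esub>\<close> have indices of opposite parity. What remains,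
  \<open>-\<zeta>(-k\<^sub>1-k\<^sub>2|1)/2\<close>, depends only on the weight, which is \<open>2n+1\<close> on both sides.
  The vanishing of odd Bernoulli numbers is read off from the exponential generating
  function \<open>x/(e\<^sup>x - 1)\<close>, which differs from an even function by \<open>x/2\<close>.\<close>

lemma bernoulli_binomial_sum:
  assumes "m \<ge> 1"
  shows "(\<Sum>k\<le>m. real (Suc m choose k) * bernoulli k) = 0"
proof -
  have "bernoulli m = - (\<Sum>k<m. real (Suc m choose k) * bernoulli k) / real (Suc m)"
    using assms bernoulli.simps[of m] by simp
  then show ?thesis
    by (simp add: lessThan_Suc_atMost[symmetric] field_simps)
qed

definition bernoulli_egf :: "real fps" where
  "bernoulli_egf = Abs_fps (\<lambda>n. bernoulli n / fact n)"

lemma fps_nth_exp_times_bernoulli_egf: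
  "fps_nth (fps_exp 1 * bernoulli_egf) n = (\<Sum>k\<le>n. real (n choose k) * bernoulli k) / fact n"
proof -
  have "fps_nth (fps_exp 1 * bernoulli_egf) n
      = (\<Sum>k\<le>n. 1 / fact (n - k) * (bernoulli k / fact k))"
    unfolding atMost_atLeast0
    by (subst sum.atLeastAtMost_rev) (simp add: fps_mult_nth bernoulli_egf_def mult.commute)
  also have "\<dots> = (\<Sum>k\<le>n. real (n choose k) * bernoulli k) / fact n"
    unfolding sum_divide_distrib by (intro sum.cong) (simp_all add: binomial_fact field_simps)
  finally show ?thesis .
qed

lemma exp_minus_one_times_bernoulli_egf: "(fps_exp 1 - 1) * bernoulli_egf = fps_X"
proof (rule fps_ext)
  fix n
  have "fps_nth ((fps_exp 1 - 1) * bernoulli_egf) n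
      = (\<Sum>k\<le>n. real (n choose k) * bernoulli k) / fact n - bernoulli n / fact n"
    by (simp add: left_diff_distrib fps_nth_exp_times_bernoulli_egf) (simp add: bernoulli_egf_def)
  also have "\<dots> = (\<Sum>k<n. real (n choose k) * bernoulli k) / fact n"
    by (simp add: field_simps flip: lessThan_Suc_atMost)
  also have "\<dots> = fps_nth fps_X n"
  proof (cases n)
    case (Suc m)
    then show ?thesis
      using bernoulli_binomial_sum[of m] by (cases "m = 0") (simp_all add: bernoulli.simps)
  qed simp
  finally show "fps_nth ((fps_exp 1 - 1) * bernoulli_egf) n = fps_nth fps_X n" .
qed

text \<open>Substituting \<open>-x\<close> into \<open>(e\<^sup>x - 1) b(x) = x\<close> and multiplying by \<open>e\<^sup>x\<close> gives
  \<open>(e\<^sup>x - 1) b(-x) = x e\<^sup>x = (e\<^sup>x - 1) (b(x) + x)\<close>; then cancel \<open>e\<^sup>x - 1 \<noteq> 0\<close>.\<close>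

lemma bernoulli_egf_reflect: "bernoulli_egf oo (- fps_X) = bernoulli_egf + fps_X"
proof -
  let ?E = "fps_exp (1::real)"
  let ?b' = "bernoulli_egf oo (- fps_X)"
  have "((?E - 1) * bernoulli_egf) oo (- fps_X) = - fps_X"
    by (simp add: exp_minus_one_times_bernoulli_egf)
  then have reflected: "(fps_exp (-1) - 1) * ?b' = - fps_X"
    by (simp add: fps_compose_mult_distrib fps_compose_sub_distrib)
  have "?E - 1 = - (?E * (fps_exp (-1) - 1))"
    using fps_exp_add_mult[of 1 "-1::real"] by (simp add: algebra_simps)
  then have "(?E - 1) * ?b' = - (?E * ((fps_exp (-1) - 1) * ?b'))"
    by (simp only: mult_minus_left mult.assoc)
  also have "\<dots> = ?E * fps_X"
    by (simp add: reflected)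
  also have "\<dots> = (?E - 1) * (bernoulli_egf + fps_X)"
    using exp_minus_one_times_bernoulli_egf by (simp add: algebra_simps)
  finally have "(?E - 1) * ?b' = (?E - 1) * (bernoulli_egf + fps_X)" .
  moreover have "?E - 1 \<noteq> 0"
  proof
    assume "?E - 1 = 0"
    then have "fps_nth (?E - 1) 1 = 0" by simp
    then show False by simp
  qed
  ultimately show ?thesis by simp
qed

lemma bernoulli_odd_eq_0:
  assumes "odd m" "m \<noteq> 1"
  shows "bernoulli m = 0"
proof -
  have "fps_nth (bernoulli_egf oo (- fps_X)) m = fps_nth (bernoulli_egf + fps_X) m"
    by (simp only: bernoulli_egf_reflect)
  then have "- (bernoulli m / fact m) = bernoulli m / fact m"
    using assms by (simp add: fps_compose_uminus' bernoulli_egf_def)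
  then show ?thesis by simp
qed

lemma bernpoly_at_1:
  assumes "m \<ge> 2"
  shows "bernpoly m 1 = bernoulli m"
proof -
  obtain j where m: "m = Suc j" and "j \<ge> 1"
    using assms by (cases m) auto
  then have "(\<Sum>k\<le>j. real (m choose k) * bernoulli k) = 0"
    using bernoulli_binomial_sum by simp
  then show ?thesis
    using m by (simp add: bernpoly_def)
qed

lemma zeta1_at_1_even_eq_0:
  assumes "even k" "k \<ge> 2"
  shows "zeta1 k 1 = 0"
  using assms by (simp add: zeta1_def bernpoly_at_1 bernoulli_odd_eq_0)

text \<open>The hypothesis \<open>k\<^sub>1 \<ge> 1\<close> is needed: for \<open>k\<^sub>1 = 0\<close> the summand \<open>q = k\<^sub>2\<close> involves
  \<open>\<zeta>(0|1) = -1/2\<close> instead of a vanishing value.\<close>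

lemma zeta2_at_1_odd_weight:
  assumes "k1 \<ge> 1" "odd (k1 + k2)"
  shows "zeta2 k1 k2 1 = - zeta1 (k1 + k2) 1 / 2"
proof -
  have "(\<Sum>q=1..k2. pochhammer (- real k2) q * (bernoulli (q + 1) / fact (q + 1))
                      * zeta1 (k1 + k2 - q) 1) = 0"
  proof (intro sum.neutral ballI)
    fix q assume q: "q \<in> {1..k2}"
    show "pochhammer (- real k2) q * (bernoulli (q + 1) / fact (q + 1)) * zeta1 (k1 + k2 - q) 1 = 0"
    proof (cases "even q")
      case True
      then show ?thesis
        using q by (simp add: bernoulli_odd_eq_0)
    next
      case False
      then have "even (k1 + k2 - q)" "k1 + k2 - q \<noteq> 0"
        using q assms by auto
      then have "k1 + k2 - q \<ge> 2"
        by presburger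
      with \<open>even (k1 + k2 - q)\<close> show ?thesis
        by (simp add: zeta1_at_1_even_eq_0)
    qed
  qed
  moreover have "zeta1 (k1 + k2 + 1) 1 = 0"
    using assms by (intro zeta1_at_1_even_eq_0) auto
  ultimately show ?thesis
    by (simp add: zeta2_def)
qed

theorem propositionB:
  fixes n :: nat
  assumes "n \<ge> 1"
  shows "zeta2 n (n + 1) 1 = zeta2 (n + 1) n 1"
  using assms by (simp add: zeta2_at_1_odd_weight add.commute)

end
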